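(* There is an absolute constant $C>0$ such that the following holds. Let $\varepsilon\in(0,1/2]$ and let $A$ be an $n\times n$ random matrix with i.i.d. entries satisfying $\mathbb{E}A_{ij}^2\le1$ and such that almost surely each entry satisfies either $A_{ij}=0$ or $\sqrt n/2\le|A_{ij}|\le 5\sqrt n/\sqrt{\varepsilon}$. Then with probability at least $1-2\exp(-\varepsilon n/4)$ there exist $I,J\subset[n]$ with $|I|,|J|\le\varepsilon n$ such that the matrix $\tilde A$ obtained from $A$ by replacing all entries with indices in $I\times J$ by zero satisfies $$\|\tilde A\|\le\frac{C\ln(\varepsilon^{-1})}{\sqrt\varepsilon}\sqrt n.$$
   Context: $\|\cdot\|$ denotes the operator norm (Euclidean norm to Euclidean norm). *)

theory Defs
  imports "HOL-Probability.Probability"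
begin

definition vec_norm2 :: "nat \<Rightarrow> (nat \<Rightarrow> real) \<Rightarrow> real" where
  "vec_norm2 n x = sqrt (\<Sum>j<n. (x j)^2)"

definition op_norm :: "nat \<Rightarrow> (nat \<Rightarrow> nat \<Rightarrow> real) \<Rightarrow> real" where
  "op_norm n B = Sup {vec_norm2 n (\<lambda>i. \<Sum>j<n. B i j * x j) | x. vec_norm2 n x \<le> 1}"

text \<open>The random n x n matrix with i.i.d. entries of law mu, realized canonically
  on the product space: the outcome w is the matrix itself, entry (i,j) is w (i,j).\<close>
definition iid_matrix_space :: "nat \<Rightarrow> real measure \<Rightarrow> (nat \<times> nat \<Rightarrow> real) measure" where
  "iid_matrix_space n \<mu> = PiM ({..<n} \<times> {..<n}) (\<lambda>_. \<mu>)"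

definition zero_block :: "nat set \<Rightarrow> nat set \<Rightarrow> (nat \<times> nat \<Rightarrow> real) \<Rightarrow> nat \<Rightarrow> nat \<Rightarrow> real" where
  "zero_block I J w i j = (if i \<in> I \<and> j \<in> J then 0 else w (i, j))"

end

theory Submission
  imports Defs
begin

text \<open>Call a row or column heavy if it has at least \<open>K \<approx> log\<^sub>2(1/\<epsilon>)\<close> nonzero entries.
  Zeroing the heavy rows against the supports of the heavy columns, and the heavy columns
  against the supports of the heavy rows, costs at most the total number \<open>S\<close> of nonzero
  entries lying in heavy lines, and leaves fewer than \<open>K\<close> nonzero entries in every row and
  column; Schur's test then bounds the norm by \<open>K\<close> times the largest entry.
  To control \<open>S\<close>, charge a line with \<open>d\<close> nonzero entries by
  \<open>exp(d [d \<ge> K]) \<le> 1 + 2\<^sup>-\<^sup>K (2e)\<^sup>d\<close>. The right-hand side is one plus a product of one factor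
  per entry, so after expanding the product over the disjoint lines the exponential moment
  of \<open>S\<close> factorises over the independent entries. Since the entries are nonzero with
  probability \<open>p \<le> 4/n\<close> by the second moment bound, a Chernoff bound finishes the proof.\<close>

section \<open>Schur's test for sparse matrices\<close>

lemma op_norm_le:
  assumes "\<And>x. vec_norm2 n x \<le> 1 \<Longrightarrow> vec_norm2 n (\<lambda>i. \<Sum>j<n. B i j * x j) \<le> c"
  shows "op_norm n B \<le> c"
  unfolding op_norm_def
proof (rule cSup_least)
  have "vec_norm2 n (\<lambda>_. 0) \<le> 1"
    by (simp add: vec_norm2_def)
  then show "{vec_norm2 n (\<lambda>i. \<Sum>j<n. B i j * x j) |x. vec_norm2 n x \<le> 1} \<noteq> {}"
    by blast
qed (use assms in blast)

lemma square_sum_le_card_support: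
  fixes c :: "'a \<Rightarrow> real"
  assumes "finite A"
  shows "(\<Sum>j\<in>A. c j)^2 \<le> card {j\<in>A. c j \<noteq> 0} * (\<Sum>j\<in>A. (c j)^2)"
proof -
  let ?S = "{j\<in>A. c j \<noteq> 0}"
  have "(\<Sum>j\<in>A. c j) = (\<Sum>j\<in>?S. c j)"
    by (rule sum.mono_neutral_right) (use assms in auto)
  then have "(\<Sum>j\<in>A. c j)^2 = (\<Sum>j\<in>?S. 1 * c j)^2"
    by simp
  also have "\<dots> \<le> (\<Sum>j\<in>?S. 1^2) * (\<Sum>j\<in>?S. (c j)^2)"
    by (rule Cauchy_Schwarz_ineq_sum)
  also have "(\<Sum>j\<in>?S. (c j)^2) = (\<Sum>j\<in>A. (c j)^2)"
    by (rule sum.mono_neutral_left) (use assms in auto)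
  also have "(\<Sum>j\<in>?S. (1::real)^2) = card ?S"
    by simp
  finally show ?thesis .
qed

lemma op_norm_sparse_le:
  fixes B :: "nat \<Rightarrow> nat \<Rightarrow> real"
  assumes rows: "\<And>i. i < n \<Longrightarrow> card {j\<in>{..<n}. B i j \<noteq> 0} \<le> R"
    and cols: "\<And>j. j < n \<Longrightarrow> card {i\<in>{..<n}. B i j \<noteq> 0} \<le> C"
    and entries: "\<And>i j. i < n \<Longrightarrow> j < n \<Longrightarrow> \<bar>B i j\<bar> \<le> a"
    and "0 \<le> a"
  shows "op_norm n B \<le> sqrt (real R * real C) * a"
proof (rule op_norm_le)
  fix x :: "nat \<Rightarrow> real"
  assume x: "vec_norm2 n x \<le> 1"
  have row_sq: "(\<Sum>j<n. B i j * x j)^2 \<le> R * (\<Sum>j<n. (B i j * x j)^2)" if i: "i < n" for i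
  proof -
    have "card {j\<in>{..<n}. B i j * x j \<noteq> 0} \<le> card {j\<in>{..<n}. B i j \<noteq> 0}"
      by (intro card_mono) auto
    with rows i have "real (card {j\<in>{..<n}. B i j * x j \<noteq> 0}) \<le> R"
      by fastforce
    then have "real (card {j\<in>{..<n}. B i j * x j \<noteq> 0}) * (\<Sum>j<n. (B i j * x j)^2)
        \<le> R * (\<Sum>j<n. (B i j * x j)^2)"
      by (intro mult_right_mono sum_nonneg) auto
    with square_sum_le_card_support[of "{..<n}" "\<lambda>j. B i j * x j"] show ?thesis
      by simp
  qed
  have col_sq: "(\<Sum>i<n. (B i j)^2) \<le> C * a^2" if j: "j < n" for j
  proof -
    have "(\<Sum>i<n. (B i j)^2) = (\<Sum>i\<in>{i\<in>{..<n}. B i j \<noteq> 0}. (B i j)^2)"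
      by (rule sum.mono_neutral_right) auto
    also have "\<dots> \<le> (\<Sum>i\<in>{i\<in>{..<n}. B i j \<noteq> 0}. a^2)"
      using entries j \<open>0 \<le> a\<close> by (intro sum_mono) (simp add: power2_le_iff_abs_le)
    also have "\<dots> \<le> C * a^2"
      using cols[OF j] by (simp add: mult_right_mono)
    finally show ?thesis .
  qed
  have "(\<Sum>i<n. (\<Sum>j<n. B i j * x j)^2) \<le> (\<Sum>i<n. R * (\<Sum>j<n. (B i j * x j)^2))"
    using row_sq by (intro sum_mono) auto
  also have "\<dots> = R * (\<Sum>i<n. \<Sum>j<n. (B i j * x j)^2)"
    by (simp add: sum_distrib_left)
  also have "\<dots> = R * (\<Sum>j<n. \<Sum>i<n. (B i j * x j)^2)"
    by (subst sum.swap) (rule refl)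
  also have "\<dots> = R * (\<Sum>j<n. (x j)^2 * (\<Sum>i<n. (B i j)^2))"
    by (simp add: sum_distrib_left power_mult_distrib mult.commute)
  also have "\<dots> \<le> R * (\<Sum>j<n. (x j)^2 * (C * a^2))"
    using col_sq by (intro mult_left_mono sum_mono) auto
  also have "\<dots> = (sqrt (real R * real C) * a)^2 * (\<Sum>j<n. (x j)^2)"
    by (simp add: sum_distrib_left power_mult_distrib mult_ac)
  also have "\<dots> \<le> (sqrt (real R * real C) * a)^2"
    using x by (intro mult_left_le) (auto simp: vec_norm2_def)
  finally show "vec_norm2 n (\<lambda>i. \<Sum>j<n. B i j * x j) \<le> sqrt (real R * real C) * a"
    unfolding vec_norm2_def using \<open>0 \<le> a\<close> by (intro real_le_lsqrt) auto
qed

section \<open>Removing heavy lines\<close>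

definition count_nonzero :: "('a \<Rightarrow> 'b::zero) \<Rightarrow> 'a set \<Rightarrow> nat" where
  "count_nonzero w L = card {q\<in>L. w q \<noteq> 0}"

definition heavy_weight :: "nat \<Rightarrow> nat \<Rightarrow> real" where
  "heavy_weight K d = (if K \<le> d then real d else 0)"

lemma count_nonzero_row: "count_nonzero w ({i} \<times> {..<n}) = card {j\<in>{..<n}. w (i, j) \<noteq> 0}"
proof -
  have "{q\<in>{i} \<times> {..<n}. w q \<noteq> 0} = Pair i ` {j\<in>{..<n}. w (i, j) \<noteq> 0}"
    by auto
  then show ?thesis
    by (simp add: count_nonzero_def card_image inj_on_def)
qed

lemma count_nonzero_col: "count_nonzero w ({..<n} \<times> {j}) = card {i\<in>{..<n}. w (i, j) \<noteq> 0}"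
proof -
  have "{q\<in>{..<n} \<times> {j}. w q \<noteq> 0} = (\<lambda>i. (i, j)) ` {i\<in>{..<n}. w (i, j) \<noteq> 0}"
    by auto
  then show ?thesis
    by (simp add: count_nonzero_def card_image inj_on_def)
qed

lemma sum_heavy_weight:
  assumes "finite A"
  shows "(\<Sum>i\<in>A. heavy_weight K (d i)) = (\<Sum>i\<in>{i\<in>A. K \<le> d i}. real (d i))"
  using assms by (simp add: heavy_weight_def sum.inter_filter)

lemma card_heavy_le_sum_heavy_weight:
  assumes "finite A" and "0 < K"
  shows "real (card {i\<in>A. K \<le> card (S i)}) \<le> (\<Sum>i\<in>A. heavy_weight K (card (S i)))"
proof -
  have "real (card {i\<in>A. K \<le> card (S i)}) = (\<Sum>i\<in>{i\<in>A. K \<le> card (S i)}. 1)"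
    by simp
  also have "\<dots> \<le> (\<Sum>i\<in>{i\<in>A. K \<le> card (S i)}. real (card (S i)))"
    using \<open>0 < K\<close> by (intro sum_mono) auto
  finally show ?thesis
    using sum_heavy_weight[OF \<open>finite A\<close>] by simp
qed

lemma card_Union_heavy_le_sum_heavy_weight:
  assumes "finite A"
  shows "real (card (\<Union>i\<in>{i\<in>A. K \<le> card (S i)}. S i)) \<le> (\<Sum>i\<in>A. heavy_weight K (card (S i)))"
proof -
  have "card (\<Union>i\<in>{i\<in>A. K \<le> card (S i)}. S i) \<le> (\<Sum>i\<in>{i\<in>A. K \<le> card (S i)}. card (S i))"
    using assms by (intro card_UN_le) auto
  then show ?thesis
    using sum_heavy_weight[OF assms] by (simp flip: of_nat_sum)
qed

lemma card_heavy_Un_heavy_supports_le: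
  assumes "finite A" and "finite B" and "0 < K"
  shows "real (card ({i\<in>A. K \<le> card (S i)} \<union> (\<Union>j\<in>{j\<in>B. K \<le> card (T j)}. T j)))
    \<le> (\<Sum>i\<in>A. heavy_weight K (card (S i))) + (\<Sum>j\<in>B. heavy_weight K (card (T j)))"
proof -
  have "real (card ({i\<in>A. K \<le> card (S i)} \<union> (\<Union>j\<in>{j\<in>B. K \<le> card (T j)}. T j)))
      \<le> real (card {i\<in>A. K \<le> card (S i)}) + real (card (\<Union>j\<in>{j\<in>B. K \<le> card (T j)}. T j))"
    using card_Un_le of_nat_mono by fastforce
  then show ?thesis
    using card_heavy_le_sum_heavy_weight[OF \<open>finite A\<close> \<open>0 < K\<close>, where S = S]
      card_Union_heavy_le_sum_heavy_weight[OF \<open>finite B\<close>, where K = K and S = T] by linarith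
qed

lemma card_le_pred_if_nonempty:
  assumes "finite S" and "T \<subseteq> S" and "T \<noteq> {} \<Longrightarrow> card S < K"
  shows "card T \<le> K - 1"
proof (cases "T = {}")
  case False
  then show ?thesis
    using assms card_mono[OF \<open>finite S\<close> \<open>T \<subseteq> S\<close>] by linarith
qed simp

lemma remove_heavy_lines:
  fixes w :: "nat \<times> nat \<Rightarrow> real"
  assumes "0 < K" and "0 \<le> a" and entries: "\<And>i j. i < n \<Longrightarrow> j < n \<Longrightarrow> \<bar>w (i, j)\<bar> \<le> a"
    and heavy: "(\<Sum>i<n. heavy_weight K (count_nonzero w ({i} \<times> {..<n})))
      + (\<Sum>j<n. heavy_weight K (count_nonzero w ({..<n} \<times> {j}))) \<le> e"
  shows "\<exists>I J. I \<subseteq> {..<n} \<and> J \<subseteq> {..<n} \<and> real (card I) \<le> e \<and> real (card J) \<le> e \<and>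
    op_norm n (zero_block I J w) \<le> real (K - 1) * a"
proof -
  define row where "row i = {j\<in>{..<n}. w (i, j) \<noteq> 0}" for i
  define col where "col j = {i\<in>{..<n}. w (i, j) \<noteq> 0}" for j
  define heavy_rows where "heavy_rows = {i\<in>{..<n}. K \<le> card (row i)}"
  define heavy_cols where "heavy_cols = {j\<in>{..<n}. K \<le> card (col j)}"
  define I where "I = heavy_rows \<union> (\<Union>j\<in>heavy_cols. col j)"
  define J where "J = heavy_cols \<union> (\<Union>i\<in>heavy_rows. row i)"
  define B where "B = zero_block I J w"
  have heavy': "(\<Sum>i<n. heavy_weight K (card (row i))) + (\<Sum>j<n. heavy_weight K (card (col j))) \<le> e"
    using heavy by (simp add: row_def col_def count_nonzero_row count_nonzero_col)
  have "real (card I) \<le> e" "real (card J) \<le> e"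
    using heavy' \<open>0 < K\<close>
      card_heavy_Un_heavy_supports_le[where A = "{..<n}" and B = "{..<n}" and K = K,
        of row col]
      card_heavy_Un_heavy_supports_le[where A = "{..<n}" and B = "{..<n}" and K = K,
        of col row]
    by (simp_all add: I_def J_def heavy_rows_def heavy_cols_def)
  moreover have "I \<subseteq> {..<n}" "J \<subseteq> {..<n}"
    by (auto simp: I_def J_def heavy_rows_def heavy_cols_def row_def col_def)
  moreover have light: "j \<in> row i \<and> i \<notin> heavy_rows \<and> j \<notin> heavy_cols"
    if "B i j \<noteq> 0" "i < n" "j < n" for i j
    using that unfolding B_def zero_block_def I_def J_def row_def col_def
    by (auto split: if_splits)
  have "card {j\<in>{..<n}. B i j \<noteq> 0} \<le> K - 1" if "i < n" for i
    using light that by (intro card_le_pred_if_nonempty[of "row i"])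
      (force simp: row_def heavy_rows_def)+
  moreover have "card {i\<in>{..<n}. B i j \<noteq> 0} \<le> K - 1" if "j < n" for j
    using light that by (intro card_le_pred_if_nonempty[of "col j"])
      (force simp: row_def col_def heavy_cols_def)+
  ultimately have "op_norm n B \<le> sqrt (real (K - 1) * real (K - 1)) * a"
    using entries \<open>0 \<le> a\<close> by (intro op_norm_sparse_le) (auto simp: B_def zero_block_def)
  then show ?thesis
    using \<open>real (card I) \<le> e\<close> \<open>real (card J) \<le> e\<close> \<open>I \<subseteq> {..<n}\<close> \<open>J \<subseteq> {..<n}\<close>
    unfolding B_def by auto
qed

section \<open>Exponential moment of the heavy weight\<close>

lemma integral_prod_components:
  fixes f :: "'b \<Rightarrow> real"
  assumes "prob_space \<mu>" and "finite I" and "U \<subseteq> I" and f: "integrable \<mu> f"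
  shows "integrable (PiM I (\<lambda>_. \<mu>)) (\<lambda>\<omega>. \<Prod>q\<in>U. f (\<omega> q))"
    and "(\<integral>\<omega>. (\<Prod>q\<in>U. f (\<omega> q)) \<partial>PiM I (\<lambda>_. \<mu>)) = (\<integral>x. f x \<partial>\<mu>) ^ card U"
proof -
  interpret prob_space \<mu> by fact
  interpret product_sigma_finite "\<lambda>_. \<mu>"
    by (simp add: product_sigma_finite_def sigma_finite_measure_axioms)
  define g where "g q = (\<lambda>x. if q \<in> U then f x else 1)" for q
  have g: "integrable \<mu> (g q)" for q
    using f by (cases "q \<in> U") (simp_all add: g_def)
  have prod_g: "(\<Prod>q\<in>U. f (\<omega> q)) = (\<Prod>q\<in>I. g q (\<omega> q))" for \<omega>
    using \<open>finite I\<close> \<open>U \<subseteq> I\<close> by (simp add: g_def prod.If_cases Int_absorb1)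
  show "integrable (PiM I (\<lambda>_. \<mu>)) (\<lambda>\<omega>. \<Prod>q\<in>U. f (\<omega> q))"
    unfolding prod_g using \<open>finite I\<close> g by (rule product_integrable_prod)
  have "integral\<^sup>L \<mu> (g q) = (if q \<in> U then integral\<^sup>L \<mu> f else 1)" for q
    by (simp add: g_def prob_space)
  then have "(\<Prod>q\<in>I. integral\<^sup>L \<mu> (g q)) = (\<Prod>q\<in>U. integral\<^sup>L \<mu> f)"
    using \<open>finite I\<close> \<open>U \<subseteq> I\<close> by (simp add: prod.If_cases Int_absorb1)
  then show "(\<integral>\<omega>. (\<Prod>q\<in>U. f (\<omega> q)) \<partial>PiM I (\<lambda>_. \<mu>)) = (\<integral>x. f x \<partial>\<mu>) ^ card U"
    unfolding prod_g using \<open>finite I\<close> g by (simp add: product_integral_prod)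
qed

lemma prod_one_plus_blocks:
  fixes f :: "'a \<Rightarrow> 'c::comm_semiring_1"
  assumes "finite \<Lambda>" and "\<And>k. k \<in> \<Lambda> \<Longrightarrow> finite (L k)"
    and "disjoint_family_on L \<Lambda>"
  shows "(\<Prod>k\<in>\<Lambda>. 1 + c * (\<Prod>q\<in>L k. f q)) = (\<Sum>R\<in>Pow \<Lambda>. c ^ card R * (\<Prod>q\<in>\<Union>(L ` R). f q))"
proof -
  have "(\<Prod>k\<in>\<Lambda>. c * (\<Prod>q\<in>L k. f q) + 1)
      = (\<Sum>R\<in>Pow \<Lambda>. (\<Prod>k\<in>R. c * (\<Prod>q\<in>L k. f q)) * (\<Prod>k\<in>\<Lambda>-R. 1))"
    using \<open>finite \<Lambda>\<close> by (rule prod_add)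
  also have "\<dots> = (\<Sum>R\<in>Pow \<Lambda>. c ^ card R * (\<Prod>q\<in>\<Union>(L ` R). f q))"
  proof (intro sum.cong refl)
    fix R assume "R \<in> Pow \<Lambda>"
    then have "finite R" "\<forall>k\<in>R. finite (L k)" "disjoint_family_on L R"
      using assms finite_subset disjoint_family_on_mono by blast+
    then show "(\<Prod>k\<in>R. c * (\<Prod>q\<in>L k. f q)) * (\<Prod>k\<in>\<Lambda>-R. 1) = c ^ card R * (\<Prod>q\<in>\<Union>(L ` R). f q)"
      by (simp add: prod.distrib prod.UNION_disjoint disjoint_family_on_def)
  qed
  finally show ?thesis
    by (simp add: add.commute)
qed

lemma integral_prod_one_plus_blocks:
  fixes f :: "'b \<Rightarrow> real"
  assumes "prob_space \<mu>" and "finite I" and "finite \<Lambda>" and sub: "\<And>k. k \<in> \<Lambda> \<Longrightarrow> L k \<subseteq> I"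
    and disj: "disjoint_family_on L \<Lambda>" and card: "\<And>k. k \<in> \<Lambda> \<Longrightarrow> card (L k) = m"
    and f: "integrable \<mu> f"
  shows "integrable (PiM I (\<lambda>_. \<mu>)) (\<lambda>\<omega>. \<Prod>k\<in>\<Lambda>. 1 + c * (\<Prod>q\<in>L k. f (\<omega> q)))"
    and "(\<integral>\<omega>. (\<Prod>k\<in>\<Lambda>. 1 + c * (\<Prod>q\<in>L k. f (\<omega> q))) \<partial>PiM I (\<lambda>_. \<mu>))
      = (1 + c * (\<integral>x. f x \<partial>\<mu>) ^ m) ^ card \<Lambda>"
proof -
  let ?M = "PiM I (\<lambda>_. \<mu>)"
  have fin: "finite (L k)" if "k \<in> \<Lambda>" for k
    using sub[OF that] \<open>finite I\<close> by (rule finite_subset)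
  have expand: "(\<Prod>k\<in>\<Lambda>. 1 + c * (\<Prod>q\<in>L k. f (\<omega> q)))
      = (\<Sum>R\<in>Pow \<Lambda>. c ^ card R * (\<Prod>q\<in>\<Union>(L ` R). f (\<omega> q)))" for \<omega>
    using \<open>finite \<Lambda>\<close> fin disj by (rule prod_one_plus_blocks)
  have sub_U: "\<Union>(L ` R) \<subseteq> I" if "R \<in> Pow \<Lambda>" for R
    using sub that by blast
  have card_U: "card (\<Union>(L ` R)) = card R * m" if "R \<in> Pow \<Lambda>" for R
  proof -
    have "finite R" "disjoint_family_on L R"
      using that \<open>finite \<Lambda>\<close> disj finite_subset disjoint_family_on_mono by blast+
    then have "card (\<Union>(L ` R)) = (\<Sum>k\<in>R. card (L k))"
      using that fin by (intro card_UN_disjoint) (auto simp: disjoint_family_on_def)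
    also have "\<dots> = (\<Sum>k\<in>R. m)"
      using that card by (intro sum.cong) auto
    also have "\<dots> = card R * m"
      by simp
    finally show ?thesis .
  qed
  note blocks = integral_prod_components[OF \<open>prob_space \<mu>\<close> \<open>finite I\<close> sub_U f]
  show "integrable ?M (\<lambda>\<omega>. \<Prod>k\<in>\<Lambda>. 1 + c * (\<Prod>q\<in>L k. f (\<omega> q)))"
    unfolding expand using blocks(1) by auto
  have "(\<integral>\<omega>. (\<Prod>k\<in>\<Lambda>. 1 + c * (\<Prod>q\<in>L k. f (\<omega> q))) \<partial>?M)
      = (\<Sum>R\<in>Pow \<Lambda>. c ^ card R * (\<integral>x. f x \<partial>\<mu>) ^ (card R * m))"
    unfolding expand using blocks card_U by (simp add: Bochner_Integration.integral_sum)
  also have "\<dots> = (\<Sum>R\<in>Pow \<Lambda>. (\<Prod>k\<in>R. c * (\<integral>x. f x \<partial>\<mu>) ^ m) * (\<Prod>k\<in>\<Lambda>-R. 1))"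
    by (simp add: power_mult power_mult_distrib mult.commute[of _ m])
  also have "\<dots> = (\<Prod>k\<in>\<Lambda>. c * (\<integral>x. f x \<partial>\<mu>) ^ m + 1)"
    using \<open>finite \<Lambda>\<close> by (rule prod_add[symmetric])
  also have "\<dots> = (1 + c * (\<integral>x. f x \<partial>\<mu>) ^ m) ^ card \<Lambda>"
    by (simp add: add.commute)
  finally show "(\<integral>\<omega>. (\<Prod>k\<in>\<Lambda>. 1 + c * (\<Prod>q\<in>L k. f (\<omega> q))) \<partial>?M)
      = (1 + c * (\<integral>x. f x \<partial>\<mu>) ^ m) ^ card \<Lambda>" .
qed

definition nonzero_factor :: "real \<Rightarrow> real" where
  "nonzero_factor x = (if x \<noteq> 0 then 2 * exp 1 else 1)"

lemma exp_heavy_weight_le: "exp (heavy_weight K d) \<le> 1 + (1/2) ^ K * (2 * exp 1) ^ d"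
proof (cases "K \<le> d")
  case True
  have "(2::real) ^ K \<le> 2 ^ d"
    using True by (rule power_increasing) simp
  then have "exp (real d) \<le> (1/2) ^ K * 2 ^ d * exp 1 ^ d"
    by (simp add: exp_of_nat_mult[symmetric] power_one_over field_simps)
  then show ?thesis
    using True by (simp add: heavy_weight_def power_mult_distrib)
qed (simp add: heavy_weight_def)

lemma power_count_nonzero:
  assumes "finite L"
  shows "(2 * exp 1) ^ count_nonzero w L = (\<Prod>q\<in>L. nonzero_factor (w q))"
  using assms by (simp add: count_nonzero_def nonzero_factor_def prod.inter_filter[symmetric])

lemma integral_nonzero_factor:
  assumes "prob_space \<mu>" and "sets \<mu> = sets borel"
  shows "integrable \<mu> nonzero_factor"
    and "(\<integral>x. nonzero_factor x \<partial>\<mu>) = 1 + (2 * exp 1 - 1) * measure \<mu> {x\<in>space \<mu>. x \<noteq> 0}"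
proof -
  interpret prob_space \<mu> by fact
  let ?A = "{x\<in>space \<mu>. x \<noteq> 0}"
  have A: "?A \<in> sets \<mu>"
    using assms(2) by simp
  have eq: "nonzero_factor x = 1 + (2 * exp 1 - 1) * indicator ?A x" if "x \<in> space \<mu>" for x
    using that by (simp add: nonzero_factor_def indicator_def)
  have int: "integrable \<mu> (\<lambda>x. 1 + (2 * exp 1 - 1) * indicator ?A x :: real)"
    using A by (simp add: emeasure_eq_measure)
  show "integrable \<mu> nonzero_factor"
    using int by (subst Bochner_Integration.integrable_cong[OF refl]) (simp_all add: eq)
  have "(\<integral>x. nonzero_factor x \<partial>\<mu>) = (\<integral>x. 1 + (2 * exp 1 - 1) * indicator ?A x \<partial>\<mu>)"
    by (rule Bochner_Integration.integral_cong) (simp_all add: eq)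
  also have "\<dots> = 1 + (2 * exp 1 - 1) * measure \<mu> ?A"
    using A by (subst Bochner_Integration.integral_add) (auto simp: prob_space emeasure_eq_measure)
  finally show "(\<integral>x. nonzero_factor x \<partial>\<mu>) = 1 + (2 * exp 1 - 1) * measure \<mu> ?A" .
qed

lemma measurable_component_borel:
  assumes "sets \<mu> = sets borel" and "q \<in> I"
  shows "(\<lambda>\<omega>. \<omega> q) \<in> borel_measurable (PiM I (\<lambda>_. \<mu>))"
proof -
  have "(\<lambda>\<omega>. \<omega> q) \<in> measurable (PiM I (\<lambda>_. \<mu>)) \<mu>"
    using \<open>q \<in> I\<close> by (rule measurable_component_singleton)
  then show ?thesis
    using measurable_cong_sets[OF refl assms(1), of "PiM I (\<lambda>_. \<mu>)"] by simp
qed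

lemma measurable_count_nonzero:
  fixes \<mu> :: "real measure"
  assumes "sets \<mu> = sets borel" and "finite L" and "L \<subseteq> I"
  shows "(\<lambda>\<omega>. real (count_nonzero \<omega> L)) \<in> borel_measurable (PiM I (\<lambda>_. \<mu>))"
proof -
  have "real (count_nonzero \<omega> L) = (\<Sum>q\<in>L. if \<omega> q \<noteq> 0 then 1 else 0)" for \<omega> :: "'a \<Rightarrow> real"
    unfolding count_nonzero_def using \<open>finite L\<close> by (simp add: sum.inter_filter[symmetric])
  moreover have "(\<lambda>\<omega>. \<Sum>q\<in>L. if \<omega> q \<noteq> 0 then 1 else 0::real) \<in> borel_measurable (PiM I (\<lambda>_. \<mu>))"
  proof (intro borel_measurable_sum)
    fix q assume "q \<in> L"
    then have "(\<lambda>\<omega>. \<omega> q) \<in> borel_measurable (PiM I (\<lambda>_. \<mu>))"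
      using assms by (intro measurable_component_borel) auto
    then show "(\<lambda>\<omega>. if \<omega> q \<noteq> 0 then 1 else 0::real) \<in> borel_measurable (PiM I (\<lambda>_. \<mu>))"
      by measurable
  qed
  ultimately show ?thesis
    by simp
qed

lemma measurable_sum_heavy_weight:
  fixes \<mu> :: "real measure"
  assumes "sets \<mu> = sets borel" and "finite I" and "\<And>k. k \<in> \<Lambda> \<Longrightarrow> L k \<subseteq> I"
  shows "(\<lambda>\<omega>. \<Sum>k\<in>\<Lambda>. heavy_weight K (count_nonzero \<omega> (L k))) \<in> borel_measurable (PiM I (\<lambda>_. \<mu>))"
proof (rule borel_measurable_sum)
  fix k assume "k \<in> \<Lambda>"
  then have [measurable]: "(\<lambda>\<omega>. real (count_nonzero \<omega> (L k))) \<in> borel_measurable (PiM I (\<lambda>_. \<mu>))"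
    using assms by (intro measurable_count_nonzero) (auto intro: finite_subset)
  have heavy_weight_real: "heavy_weight K d = (if real K \<le> real d then real d else 0)" for d
    by (simp add: heavy_weight_def)
  show "(\<lambda>\<omega>. heavy_weight K (count_nonzero \<omega> (L k))) \<in> borel_measurable (PiM I (\<lambda>_. \<mu>))"
    unfolding heavy_weight_real by measurable
qed

lemma heavy_lines_exp_moment:
  fixes \<mu> :: "real measure" and L :: "'k \<Rightarrow> 'a set" and K :: nat
  assumes "prob_space \<mu>" and "sets \<mu> = sets borel" and "finite I" and "finite \<Lambda>"
    and sub: "\<And>k. k \<in> \<Lambda> \<Longrightarrow> L k \<subseteq> I" and "disjoint_family_on L \<Lambda>"
    and "\<And>k. k \<in> \<Lambda> \<Longrightarrow> card (L k) = m"
  defines "S \<equiv> \<lambda>\<omega>. \<Sum>k\<in>\<Lambda>. heavy_weight K (count_nonzero \<omega> (L k))"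
    and "\<rho> \<equiv> 1 + (2 * exp 1 - 1) * measure \<mu> {x\<in>space \<mu>. x \<noteq> 0}"
  shows "integrable (PiM I (\<lambda>_. \<mu>)) (\<lambda>\<omega>. exp (S \<omega>))"
    and "(\<integral>\<omega>. exp (S \<omega>) \<partial>PiM I (\<lambda>_. \<mu>)) \<le> (1 + (1/2) ^ K * \<rho> ^ m) ^ card \<Lambda>"
proof -
  let ?M = "PiM I (\<lambda>_. \<mu>)"
  define F where "F \<omega> = (\<Prod>k\<in>\<Lambda>. 1 + (1/2) ^ K * (\<Prod>q\<in>L k. nonzero_factor (\<omega> q)))" for \<omega>
  have pointwise: "exp (S \<omega>) \<le> F \<omega>" for \<omega>
  proof -
    have "exp (S \<omega>) = (\<Prod>k\<in>\<Lambda>. exp (heavy_weight K (count_nonzero \<omega> (L k))))"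
      unfolding S_def using \<open>finite \<Lambda>\<close> by (rule exp_sum)
    also have "\<dots> \<le> F \<omega>"
      unfolding F_def
    proof (intro prod_mono conjI)
      fix k assume "k \<in> \<Lambda>"
      then have "finite (L k)"
        using sub \<open>finite I\<close> by (blast intro: finite_subset)
      then show "exp (heavy_weight K (count_nonzero \<omega> (L k)))
          \<le> 1 + (1/2) ^ K * (\<Prod>q\<in>L k. nonzero_factor (\<omega> q))"
        using exp_heavy_weight_le by (simp only: power_count_nonzero[symmetric])
    qed simp
    finally show ?thesis .
  qed
  note F = integral_prod_one_plus_blocks[OF \<open>prob_space \<mu>\<close> \<open>finite I\<close> \<open>finite \<Lambda>\<close> sub assms(6,7)
      integral_nonzero_factor(1)[OF assms(1,2)], where c = "(1/2) ^ K", folded F_def]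
  have "S \<in> borel_measurable ?M"
    unfolding S_def using assms(2,3) sub by (rule measurable_sum_heavy_weight)
  then show int: "integrable ?M (\<lambda>\<omega>. exp (S \<omega>))"
    using pointwise by (intro Bochner_Integration.integrable_bound[OF F(1)])
      (auto intro: order.trans[OF _ abs_ge_self])
  have "(\<integral>\<omega>. exp (S \<omega>) \<partial>?M) \<le> (\<integral>\<omega>. F \<omega> \<partial>?M)"
    using int F(1) pointwise by (rule integral_mono)
  then show "(\<integral>\<omega>. exp (S \<omega>) \<partial>?M) \<le> (1 + (1/2) ^ K * \<rho> ^ m) ^ card \<Lambda>"
    by (simp add: F(2) integral_nonzero_factor(2)[OF assms(1,2)] \<rho>_def)
qed

lemma heavy_lines_tail:
  fixes \<mu> :: "real measure" and L :: "'k \<Rightarrow> 'a set" and K :: nat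
  assumes "prob_space \<mu>" and "sets \<mu> = sets borel" and "finite I" and "finite \<Lambda>"
    and "\<And>k. k \<in> \<Lambda> \<Longrightarrow> L k \<subseteq> I" and "disjoint_family_on L \<Lambda>"
    and "\<And>k. k \<in> \<Lambda> \<Longrightarrow> card (L k) = m"
  defines "M \<equiv> PiM I (\<lambda>_. \<mu>)"
    and "S \<equiv> \<lambda>\<omega>. \<Sum>k\<in>\<Lambda>. heavy_weight K (count_nonzero \<omega> (L k))"
    and "\<rho> \<equiv> 1 + (2 * exp 1 - 1) * measure \<mu> {x\<in>space \<mu>. x \<noteq> 0}"
  shows "measure M {\<omega>\<in>space M. t \<le> S \<omega>} \<le> exp (- t) * (1 + (1/2) ^ K * \<rho> ^ m) ^ card \<Lambda>"
proof -
  interpret prob_space M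
    unfolding M_def using \<open>prob_space \<mu>\<close> by (rule prob_space_PiM)
  note moment = heavy_lines_exp_moment[OF assms(1-7), where K = K, folded M_def \<rho>_def]
  have "set_integrable M (space M) (\<lambda>\<omega>. exp (1 * S \<omega>))"
    using moment(1)
    by (simp add: S_def set_integrable_def indicator_def cong: Bochner_Integration.integrable_cong)
  then have "measure M {\<omega>\<in>space M. t \<le> S \<omega>} \<le> exp (- 1 * t) * (\<integral>\<omega>\<in>space M. exp (1 * S \<omega>) \<partial>M)"
    by (intro Chernoff_ineq_ge) auto
  also have "\<dots> = exp (- t) * (\<integral>\<omega>. exp (S \<omega>) \<partial>M)"
    using moment(1) by (simp add: S_def set_integral_space)
  also have "\<dots> \<le> exp (- t) * (1 + (1/2) ^ K * \<rho> ^ m) ^ card \<Lambda>"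
    using moment(2) by (intro mult_left_mono) (auto simp: S_def)
  finally show ?thesis .
qed

lemma prob_nonzero_le_second_moment:
  fixes \<mu> :: "real measure"
  assumes "prob_space \<mu>" and "sets \<mu> = sets borel"
    and support: "AE x in \<mu>. x = 0 \<or> (s \<le> \<bar>x\<bar> \<and> \<bar>x\<bar> \<le> b)" and "0 \<le> s"
  shows "s^2 * measure \<mu> {x\<in>space \<mu>. x \<noteq> 0} \<le> (\<integral>x. x^2 \<partial>\<mu>)"
proof -
  interpret prob_space \<mu> by fact
  let ?A = "{x\<in>space \<mu>. x \<noteq> 0}"
  have A: "?A \<in> sets \<mu>"
    using assms(2) by simp
  have "(\<lambda>x. x^2) \<in> borel_measurable \<mu>"
    by (subst measurable_cong_sets[OF assms(2) refl]) simp
  moreover have "AE x in \<mu>. norm (x^2) \<le> b^2"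
    using support by eventually_elim (auto simp: abs_le_square_iff[symmetric])
  ultimately have int: "integrable \<mu> (\<lambda>x. x^2)"
    by (intro integrable_const_bound)
  have "s^2 * measure \<mu> ?A = (\<integral>x. s^2 * indicator ?A x \<partial>\<mu>)"
    using A by (simp add: emeasure_eq_measure)
  also have "\<dots> \<le> (\<integral>x. x^2 \<partial>\<mu>)"
  proof (rule integral_mono_AE[OF _ int])
    show "integrable \<mu> (\<lambda>x. s^2 * indicator ?A x)"
      using A by (simp add: emeasure_eq_measure)
    show "AE x in \<mu>. s^2 * indicator ?A x \<le> x^2"
      using support by eventually_elim
        (use \<open>0 \<le> s\<close> in \<open>auto simp: indicator_def abs_le_square_iff[symmetric]\<close>)
  qed
  finally show ?thesis .
qed

lemma half_power_ceiling_log_le: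
  assumes "0 < \<epsilon>"
  shows "(1/2::real) ^ nat \<lceil>log 2 (1/\<epsilon>)\<rceil> \<le> \<epsilon>"
proof -
  have "1/\<epsilon> = (2::real) powr log 2 (1/\<epsilon>)"
    using assms by simp
  also have "\<dots> \<le> 2 powr real (nat \<lceil>log 2 (1/\<epsilon>)\<rceil>)"
    by (intro powr_mono) linarith+
  also have "\<dots> = 2 ^ nat \<lceil>log 2 (1/\<epsilon>)\<rceil>"
    by (simp add: powr_realpow)
  finally show ?thesis
    using assms by (simp add: power_one_over field_simps)
qed

lemma ceiling_log_le_ln:
  assumes "0 < \<epsilon>" and "\<epsilon> \<le> 1/2"
  shows "real (30 + nat \<lceil>log 2 (1/\<epsilon>)\<rceil>) \<le> 48 * ln (1/\<epsilon>)"
proof -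
  have ln2: "2/3 \<le> ln (2::real)" "ln 2 \<le> ln (1/\<epsilon>)"
    using ln2_ge_two_thirds assms by (auto simp: field_simps)
  have "log 2 (1/\<epsilon>) = ln (1/\<epsilon>) / ln 2"
    by (simp add: log_def)
  also have "\<dots> \<le> ln (1/\<epsilon>) / (2/3)"
    using ln2 by (intro divide_left_mono) auto
  finally have log_le: "log 2 (1/\<epsilon>) \<le> 3/2 * ln (1/\<epsilon>)"
    by simp
  have "0 \<le> log 2 (1/\<epsilon>)"
    using assms by simp
  then have "real (nat \<lceil>log 2 (1/\<epsilon>)\<rceil>) = of_int \<lceil>log 2 (1/\<epsilon>)\<rceil>"
    by (simp add: of_nat_nat)
  then have "real (nat \<lceil>log 2 (1/\<epsilon>)\<rceil>) \<le> 3/2 * ln (1/\<epsilon>) + 1"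
    using log_le of_int_ceiling_le_add_one[of "log 2 (1/\<epsilon>)"] by linarith
  then show ?thesis
    using ln2 by linarith
qed

text \<open>The factor \<open>2^-\<lceil>log\<^sub>2(1/\<epsilon>)\<rceil>\<close> of \<open>2^-K\<close> supplies the \<open>\<epsilon>\<close>; the remaining
  \<open>2^-31\<close> absorbs \<open>(1 + (2e - 1) p)^n \<le> e^18 < 2^29\<close>.\<close>
lemma heavy_threshold_bound:
  fixes \<epsilon> p :: real
  assumes "0 < \<epsilon>" and "0 \<le> p" and "real n * p \<le> 4"
  shows "(1/2) ^ (31 + nat \<lceil>log 2 (1/\<epsilon>)\<rceil>) * (1 + (2 * exp 1 - 1) * p) ^ n \<le> \<epsilon> / 4"
proof -
  have e: "1 \<le> exp (1::real)" "exp (1::real) < 272/100"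
    using e_less_272 by auto
  have coeff_nonneg: "0 \<le> (2 * exp 1 - 1) * p"
    using e(1) \<open>0 \<le> p\<close> by (intro mult_nonneg_nonneg) linarith+
  have "(1 + (2 * exp 1 - 1) * p) ^ n \<le> exp ((2 * exp 1 - 1) * p) ^ n"
    using coeff_nonneg by (intro power_mono) (auto simp: exp_ge_add_one_self add.commute)
  also have "\<dots> = exp ((2 * exp 1 - 1) * (real n * p))"
    by (simp add: exp_of_nat_mult[symmetric] mult_ac)
  also have "\<dots> \<le> exp 18"
  proof -
    have "(2 * exp 1 - 1) * (real n * p) \<le> (2 * exp 1 - 1) * 4"
      using assms(3) e(1) by (intro mult_left_mono) linarith+
    then show ?thesis
      using e(2) by simp
  qed
  also have "\<dots> = exp 1 ^ 18"
    by (simp flip: exp_of_nat_mult)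
  also have "\<dots> \<le> 3 ^ 18"
    using e by (intro power_mono) auto
  also have "\<dots> \<le> (2::real) ^ 29"
    by simp
  finally have moment: "(1 + (2 * exp 1 - 1) * p) ^ n \<le> 2 ^ 29" .
  have "(1/2) ^ (31 + nat \<lceil>log 2 (1/\<epsilon>)\<rceil>) * (1 + (2 * exp 1 - 1) * p) ^ n
      = (1/2) ^ 31 * ((1/2) ^ nat \<lceil>log 2 (1/\<epsilon>)\<rceil> * (1 + (2 * exp 1 - 1) * p) ^ n)"
    by (simp add: power_add)
  also have "\<dots> \<le> (1/2) ^ 31 * (\<epsilon> * 2 ^ 29)"
    using moment half_power_ceiling_log_le[OF \<open>0 < \<epsilon>\<close>] coeff_nonneg \<open>0 < \<epsilon>\<close>
    by (intro mult_left_mono mult_mono) auto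
  also have "\<dots> = \<epsilon> / 4"
    by (simp add: power_one_over)
  finally show ?thesis .
qed

lemma (in prob_space) prob_compl_Un_null_ge:
  assumes "A \<in> events" and "B \<in> events" and "N \<in> null_sets M"
  shows "1 - prob A - prob B \<le> prob (space M - (A \<union> B \<union> N))"
proof -
  have "prob (A \<union> B \<union> N) = prob (A \<union> B)"
    using assms by (intro measure_Un_null_set) auto
  also have "\<dots> \<le> prob A + prob B"
    using assms by (intro measure_subadditive) (auto simp: emeasure_eq_measure)
  finally show ?thesis
    using assms by (subst prob_compl) auto
qed

lemma iid_matrix_heavy_lines_tail:
  fixes \<mu> :: "real measure" and K :: nat and L :: "nat \<Rightarrow> (nat \<times> nat) set"
  assumes "prob_space \<mu>" and "sets \<mu> = sets borel" and "0 \<le> \<epsilon>"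
    and threshold: "(1/2) ^ K * (1 + (2 * exp 1 - 1) * measure \<mu> {x\<in>space \<mu>. x \<noteq> 0}) ^ n \<le> \<epsilon> / 4"
    and lines: "\<And>k. k \<in> {..<n} \<Longrightarrow> L k \<subseteq> {..<n} \<times> {..<n}" "disjoint_family_on L {..<n}"
      "\<And>k. k \<in> {..<n} \<Longrightarrow> card (L k) = n"
  defines "A \<equiv> {\<omega>\<in>space (iid_matrix_space n \<mu>).
    \<epsilon> * real n / 2 \<le> (\<Sum>k<n. heavy_weight K (count_nonzero \<omega> (L k)))}"
  shows "A \<in> sets (iid_matrix_space n \<mu>)"
    and "measure (iid_matrix_space n \<mu>) A \<le> exp (- \<epsilon> * real n / 4)"
proof -
  have M: "iid_matrix_space n \<mu> = PiM ({..<n} \<times> {..<n}) (\<lambda>_. \<mu>)"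
    by (simp add: iid_matrix_space_def)
  have [measurable]: "(\<lambda>\<omega>. \<Sum>k<n. heavy_weight K (count_nonzero \<omega> (L k)))
      \<in> borel_measurable (iid_matrix_space n \<mu>)"
    unfolding M using assms(2) lines(1) by (intro measurable_sum_heavy_weight) auto
  show "A \<in> sets (iid_matrix_space n \<mu>)"
    unfolding A_def by measurable
  let ?\<rho> = "1 + (2 * exp 1 - 1) * measure \<mu> {x\<in>space \<mu>. x \<noteq> 0}"
  have "0 \<le> ?\<rho>"
    using exp_ge_add_one_self[of 1] by (intro add_nonneg_nonneg mult_nonneg_nonneg) auto
  then have "(1 + (1/2) ^ K * ?\<rho> ^ n) ^ n \<le> exp (\<epsilon> / 4) ^ n"
    using threshold \<open>0 \<le> \<epsilon>\<close>
    by (intro power_mono) (auto intro: order.trans[OF _ exp_ge_add_one_self])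
  then have "exp (- (\<epsilon> * real n / 2)) * (1 + (1/2) ^ K * ?\<rho> ^ n) ^ n
      \<le> exp (- (\<epsilon> * real n / 2)) * exp (\<epsilon> * real n / 4)"
    by (simp add: exp_of_nat_mult[symmetric] mult.commute)
  also have "\<dots> = exp (- \<epsilon> * real n / 4)"
    by (simp flip: exp_add)
  finally show "measure (iid_matrix_space n \<mu>) A \<le> exp (- \<epsilon> * real n / 4)"
    using heavy_lines_tail[OF assms(1,2) _ finite_lessThan lines,
        where K = K and t = "\<epsilon> * real n / 2"]
    unfolding A_def M by simp
qed

lemma iid_matrix_light_lines_event:
  fixes \<mu> :: "real measure" and K :: nat
  assumes "prob_space \<mu>" and "sets \<mu> = sets borel" and entries: "AE x in \<mu>. \<bar>x\<bar> \<le> a"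
    and "0 \<le> \<epsilon>"
    and threshold: "(1/2) ^ K * (1 + (2 * exp 1 - 1) * measure \<mu> {x\<in>space \<mu>. x \<noteq> 0}) ^ n \<le> \<epsilon> / 4"
  shows "\<exists>E\<in>sets (iid_matrix_space n \<mu>).
    1 - 2 * exp (- \<epsilon> * real n / 4) \<le> measure (iid_matrix_space n \<mu>) E \<and>
    (\<forall>w\<in>E. (\<forall>i j. i < n \<longrightarrow> j < n \<longrightarrow> \<bar>w (i, j)\<bar> \<le> a) \<and>
      (\<Sum>i<n. heavy_weight K (count_nonzero w ({i} \<times> {..<n})))
        + (\<Sum>j<n. heavy_weight K (count_nonzero w ({..<n} \<times> {j}))) \<le> \<epsilon> * real n)"
proof -
  define M where "M = iid_matrix_space n \<mu>"
  interpret prob_space M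
    unfolding M_def iid_matrix_space_def using \<open>prob_space \<mu>\<close> by (rule prob_space_PiM)
  let ?A = "\<lambda>L. {\<omega>\<in>space M. \<epsilon> * real n / 2 \<le> (\<Sum>k<n. heavy_weight K (count_nonzero \<omega> (L k)))}"
  note tail = iid_matrix_heavy_lines_tail[OF assms(1,2,4) threshold, folded M_def]
  have rows: "?A (\<lambda>i. {i} \<times> {..<n}) \<in> sets M"
    "measure M (?A (\<lambda>i. {i} \<times> {..<n})) \<le> exp (- \<epsilon> * real n / 4)"
    by (rule tail; auto simp: disjoint_family_on_def)+
  have cols: "?A (\<lambda>j. {..<n} \<times> {j}) \<in> sets M"
    "measure M (?A (\<lambda>j. {..<n} \<times> {j})) \<le> exp (- \<epsilon> * real n / 4)"
    by (rule tail; auto simp: disjoint_family_on_def)+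
  have "AE \<omega> in M. \<forall>q\<in>{..<n} \<times> {..<n}. \<bar>\<omega> q\<bar> \<le> a"
    unfolding M_def iid_matrix_space_def using \<open>prob_space \<mu>\<close> entries
    by (intro AE_finite_allI AE_PiM_component) auto
  then obtain N where N: "\<And>\<omega>. \<omega> \<in> space M - N \<Longrightarrow> \<forall>q\<in>{..<n} \<times> {..<n}. \<bar>\<omega> q\<bar> \<le> a" "N \<in> null_sets M"
    by (elim AE_E3) blast
  define E where "E = space M - (?A (\<lambda>i. {i} \<times> {..<n}) \<union> ?A (\<lambda>j. {..<n} \<times> {j}) \<union> N)"
  have "1 - 2 * exp (- \<epsilon> * real n / 4) \<le> measure M E"
    using prob_compl_Un_null_ge[OF rows(1) cols(1) N(2)] rows(2) cols(2) unfolding E_def by linarith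
  moreover have "E \<in> sets M"
    using rows(1) cols(1) N(2) by (auto simp: E_def)
  moreover have "\<forall>w\<in>E. (\<forall>i j. i < n \<longrightarrow> j < n \<longrightarrow> \<bar>w (i, j)\<bar> \<le> a) \<and>
      (\<Sum>i<n. heavy_weight K (count_nonzero w ({i} \<times> {..<n})))
        + (\<Sum>j<n. heavy_weight K (count_nonzero w ({..<n} \<times> {j}))) \<le> \<epsilon> * real n"
    using N(1) by (auto simp: E_def)
  ultimately show ?thesis
    unfolding M_def by blast
qed

lemma iid_matrix_block_regularization:
  fixes \<mu> :: "real measure"
  assumes \<epsilon>: "0 < \<epsilon>" "\<epsilon> \<le> 1/2" and \<mu>: "prob_space \<mu>" "sets \<mu> = sets borel"
    and moment: "(\<integral>x. x^2 \<partial>\<mu>) \<le> 1"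
    and support: "AE x in \<mu>. x = 0 \<or> (sqrt (real n) / 2 \<le> \<bar>x\<bar> \<and> \<bar>x\<bar> \<le> 5 * sqrt (real n) / sqrt \<epsilon>)"
  shows "\<exists>E \<in> sets (iid_matrix_space n \<mu>).
    measure (iid_matrix_space n \<mu>) E \<ge> 1 - 2 * exp (- \<epsilon> * real n / 4) \<and>
    (\<forall>w \<in> E. \<exists>I J. I \<subseteq> {..<n} \<and> J \<subseteq> {..<n} \<and>
      real (card I) \<le> \<epsilon> * real n \<and> real (card J) \<le> \<epsilon> * real n \<and>
      op_norm n (zero_block I J w) \<le> 240 * ln (1 / \<epsilon>) / sqrt \<epsilon> * sqrt (real n))"
proof -
  define a where "a = 5 * sqrt (real n) / sqrt \<epsilon>"
  define K where "K = 31 + nat \<lceil>log 2 (1/\<epsilon>)\<rceil>"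
  let ?p = "measure \<mu> {x\<in>space \<mu>. x \<noteq> 0}"
  have "(sqrt (real n) / 2)^2 * ?p \<le> 1"
    using prob_nonzero_le_second_moment[OF \<mu> support] moment by simp
  then have threshold: "(1/2) ^ K * (1 + (2 * exp 1 - 1) * ?p) ^ n \<le> \<epsilon> / 4"
    unfolding K_def using \<epsilon> by (intro heavy_threshold_bound) (auto simp: power_divide)
  have entries: "AE x in \<mu>. \<bar>x\<bar> \<le> a"
    using support by eventually_elim (use \<epsilon> in \<open>auto simp: a_def\<close>)
  have "real (K - 1) * a \<le> 48 * ln (1/\<epsilon>) * a"
    using ceiling_log_le_ln[OF \<epsilon>] \<epsilon> by (intro mult_right_mono) (auto simp: K_def a_def)
  also have "\<dots> = 240 * ln (1 / \<epsilon>) / sqrt \<epsilon> * sqrt (real n)"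
    by (simp add: a_def)
  finally have bound: "real (K - 1) * a \<le> 240 * ln (1 / \<epsilon>) / sqrt \<epsilon> * sqrt (real n)" .
  obtain E where E: "E \<in> sets (iid_matrix_space n \<mu>)"
    "1 - 2 * exp (- \<epsilon> * real n / 4) \<le> measure (iid_matrix_space n \<mu>) E"
    and light: "\<And>w. w \<in> E \<Longrightarrow> (\<forall>i j. i < n \<longrightarrow> j < n \<longrightarrow> \<bar>w (i, j)\<bar> \<le> a) \<and>
      (\<Sum>i<n. heavy_weight K (count_nonzero w ({i} \<times> {..<n})))
        + (\<Sum>j<n. heavy_weight K (count_nonzero w ({..<n} \<times> {j}))) \<le> \<epsilon> * real n"
    using iid_matrix_light_lines_event[OF \<mu> entries _ threshold] \<epsilon>(1) by auto
  have "\<exists>I J. I \<subseteq> {..<n} \<and> J \<subseteq> {..<n} \<and> real (card I) \<le> \<epsilon> * real n \<and>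
      real (card J) \<le> \<epsilon> * real n \<and> op_norm n (zero_block I J w) \<le> real (K - 1) * a"
    if "w \<in> E" for w
    using light[OF that] \<epsilon>(1) by (intro remove_heavy_lines) (auto simp: K_def a_def)
  with E bound show ?thesis
    by (meson order_trans)
qed

theorem mainTheorem16:
  shows "\<exists>C::real. C > 0 \<and>
    (\<forall>(n::nat) (\<epsilon>::real) (\<mu>::real measure).
      0 < \<epsilon> \<and> \<epsilon> \<le> 1/2 \<and> prob_space \<mu> \<and> sets \<mu> = sets borel \<and>
      (\<integral>x. x^2 \<partial>\<mu>) \<le> 1 \<and>
      (AE x in \<mu>. x = 0 \<or> (sqrt (real n) / 2 \<le> \<bar>x\<bar> \<and> \<bar>x\<bar> \<le> 5 * sqrt (real n) / sqrt \<epsilon>))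
      \<longrightarrow>
      (\<exists>E \<in> sets (iid_matrix_space n \<mu>).
         measure (iid_matrix_space n \<mu>) E \<ge> 1 - 2 * exp (- \<epsilon> * real n / 4) \<and>
         (\<forall>w \<in> E. \<exists>I J. I \<subseteq> {..<n} \<and> J \<subseteq> {..<n} \<and>
             real (card I) \<le> \<epsilon> * real n \<and> real (card J) \<le> \<epsilon> * real n \<and>
             op_norm n (zero_block I J w) \<le> C * ln (1 / \<epsilon>) / sqrt \<epsilon> * sqrt (real n))))"
  by (intro exI[of _ 240] conjI allI impI) (simp, blast intro: iid_matrix_block_regularization)

end
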